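(* In the group-based tree model described in the context (with arbitrary real edge parameters), let $e$ be a pendant edge of $\mathscr{T}$ with leaf $i$ and internal endpoint $\nu$. Let $j,k$ be leaves distinct from $i$ such that the path between $j$ and $k$ passes through $\nu$. For $a,b,c\in G$ let $w(a,b,c)\in G^m$ assign $a$ to leaf $i$, $b$ to leaf $j$, $c$ to leaf $k$ and $0$ to all other leaves. Then for every $h\in G$, $q_{w(0,-h,h)}\neq 0$ and $$\big[\check f^{(e)}(h)\big]^2=\frac{q_{w(h,-h,0)}\;q_{w(-h,0,h)}}{q_{w(0,-h,h)}}.$$
   Context: Group-based model on a tree. $G$ is a finite abelian group written additively with identity $0$; fix $G\cong\prod_k\mathbb{Z}_{n_k}$ and for $g,h\in G$ put $\hat g(h)=\prod_k\exp(2\pi i\,g_kh_k/n_k)$. The Fourier transform of $a:G\to\mathbb{C}$ is $\check a(g)=\sum_{h\in G}\hat g(h)a(h)$. $\mathscr{T}$ is a finite tree with $m$ leaves, one of which is designated the root leaf $r$. Each edge $e$ carries a function $\psi^{(e)}:G\to\mathbb{R}$ with $\sum_g\psi^{(e)}(g)=0$ and $\psi^{(e)}(g)=\psi^{(e)}(-g)$ (its values at $g\ne0$ are the edge parameters of $e$); put $Q^{(e)}_{g,h}=\psi^{(e)}(h-g)$, $P^{(e)}=\exp(Q^{(e)})$, $f^{(e)}(h)=P^{(e)}_{0,h}$, so $P^{(e)}_{g,h}=f^{(e)}(h-g)$. Edges are directed away from $r$. For $\mathbf g\in G^{m}$ (indexed by all leaves, $r$ included), $p_{\mathbf g}=\sum_\sigma\prod_{e=(u\to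 v)}P^{(e)}_{\sigma(u),\sigma(v)}$, the sum over all maps $\sigma$ from vertices to $G$ with $\sigma(r)=0$ and $\sigma$ equal to $\mathbf g$ on the leaves. The Fourier transform is $q_{\mathbf g}=\sum_{\mathbf h\in G^m}\prod_{x}\hat g_x(h_x)\,p_{\mathbf h}$. For an edge $e$, $\Lambda(e)$ is the set of leaves whose path to $r$ contains $e$, and ${}^*g_e=\sum_{x\in\Lambda(e)}g_x$. It is a known fact (Hendy; Evans–Speed) that $q_{\mathbf g}=\prod_{e}\check f^{(e)}({}^*g_e)$ for all $\mathbf g\in G^m$. *)

theory Defs
  imports "HOL-Analysis.Analysis"
begin

section \<open>The group G = Z_{n_1} x ... x Z_{n_K}, elements as int lists\<close>

definition Gset :: "nat list \<Rightarrow> int list set" where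
  "Gset ns = {g. length g = length ns \<and> (\<forall>k<length ns. 0 \<le> g!k \<and> g!k < int (ns!k))}"

definition gzero :: "nat list \<Rightarrow> int list" where
  "gzero ns = replicate (length ns) 0"

definition gadd :: "nat list \<Rightarrow> int list \<Rightarrow> int list \<Rightarrow> int list" where
  "gadd ns g h = map (\<lambda>k. (g!k + h!k) mod int (ns!k)) [0..<length ns]"

definition gneg :: "nat list \<Rightarrow> int list \<Rightarrow> int list" where
  "gneg ns g = map (\<lambda>k. (- (g!k)) mod int (ns!k)) [0..<length ns]"

definition gsub :: "nat list \<Rightarrow> int list \<Rightarrow> int list \<Rightarrow> int list" where
  "gsub ns h g = gadd ns h (gneg ns g)"

definition gchar :: "nat list \<Rightarrow> int list \<Rightarrow> int list \<Rightarrow> complex" where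
  "gchar ns g h = (\<Prod>k<length ns.
      exp (2 * complex_of_real pi * \<i> * of_int (g!k * h!k) / of_nat (ns!k)))"

definition fourier :: "nat list \<Rightarrow> (int list \<Rightarrow> complex) \<Rightarrow> int list \<Rightarrow> complex" where
  "fourier ns a g = (\<Sum>h\<in>Gset ns. gchar ns g h * a h)"

fun matpow :: "'a set \<Rightarrow> ('a \<Rightarrow> 'a \<Rightarrow> real) \<Rightarrow> nat \<Rightarrow> 'a \<Rightarrow> 'a \<Rightarrow> real" where
  "matpow A Q 0 a b = (if a = b then 1 else 0)"
| "matpow A Q (Suc n) a b = (\<Sum>x\<in>A. matpow A Q n a x * Q x b)"

definition mexp :: "'a set \<Rightarrow> ('a \<Rightarrow> 'a \<Rightarrow> real) \<Rightarrow> 'a \<Rightarrow> 'a \<Rightarrow> real" where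
  "mexp A Q a b = (\<Sum>n. matpow A Q n a b / fact n)"

definition edge_param :: "nat list \<Rightarrow> (int list \<Rightarrow> real) \<Rightarrow> bool" where
  "edge_param ns psi \<longleftrightarrow> (\<Sum>g\<in>Gset ns. psi g) = 0 \<and> (\<forall>g\<in>Gset ns. psi g = psi (gneg ns g))"

definition Qmat :: "nat list \<Rightarrow> (int list \<Rightarrow> real) \<Rightarrow> int list \<Rightarrow> int list \<Rightarrow> real" where
  "Qmat ns psi g h = psi (gsub ns h g)"

definition Pmat :: "nat list \<Rightarrow> (int list \<Rightarrow> real) \<Rightarrow> int list \<Rightarrow> int list \<Rightarrow> real" where
  "Pmat ns psi = mexp (Gset ns) (Qmat ns psi)"

definition fedge :: "nat list \<Rightarrow> (int list \<Rightarrow> real) \<Rightarrow> int list \<Rightarrow> real" where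
  "fedge ns psi h = Pmat ns psi (gzero ns) h"

definition fcheck :: "nat list \<Rightarrow> (int list \<Rightarrow> real) \<Rightarrow> int list \<Rightarrow> complex" where
  "fcheck ns psi = fourier ns (\<lambda>x. complex_of_real (fedge ns psi x))"

section \<open>Trees (undirected edges as 2-element vertex sets)\<close>

definition is_path :: "'v set set \<Rightarrow> 'v list \<Rightarrow> 'v \<Rightarrow> 'v \<Rightarrow> bool" where
  "is_path E p a b \<longleftrightarrow> p \<noteq> [] \<and> hd p = a \<and> last p = b \<and> distinct p \<and>
     (\<forall>t. Suc t < length p \<longrightarrow> {p!t, p!Suc t} \<in> E)"

definition is_cycle :: "'v set set \<Rightarrow> 'v list \<Rightarrow> bool" where
  "is_cycle E p \<longleftrightarrow> length p \<ge> 3 \<and> distinct p \<and>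
     (\<forall>t. Suc t < length p \<longrightarrow> {p!t, p!Suc t} \<in> E) \<and> {last p, hd p} \<in> E"

definition is_tree :: "'v set \<Rightarrow> 'v set set \<Rightarrow> bool" where
  "is_tree V E \<longleftrightarrow> finite V \<and> V \<noteq> {} \<and>
     (\<forall>e\<in>E. \<exists>u v. e = {u, v} \<and> u \<noteq> v \<and> u \<in> V \<and> v \<in> V) \<and>
     (\<forall>u\<in>V. \<forall>v\<in>V. \<exists>p. is_path E p u v) \<and>
     (\<nexists>p. is_cycle E p)"

definition leaves :: "'v set \<Rightarrow> 'v set set \<Rightarrow> 'v set" where
  "leaves V E = {v\<in>V. card {e\<in>E. v \<in> e} = 1}"

text \<open>Edges directed away from the root leaf r: (u,v) with u on the path from r to v.\<close>
definition dedges :: "'v set set \<Rightarrow> 'v \<Rightarrow> ('v \<times> 'v) set" where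
  "dedges E r = {(u, v). {u, v} \<in> E \<and> (\<exists>p. is_path E p r v \<and> u \<in> set p)}"

definition pprob :: "nat list \<Rightarrow> 'v set \<Rightarrow> 'v set set \<Rightarrow> 'v \<Rightarrow> ('v set \<Rightarrow> int list \<Rightarrow> real)
     \<Rightarrow> ('v \<Rightarrow> int list) \<Rightarrow> real" where
  "pprob ns V E r psi g =
     (\<Sum>\<sigma>\<in>{\<sigma>\<in>PiE V (\<lambda>_. Gset ns). \<sigma> r = gzero ns \<and> (\<forall>x\<in>leaves V E. \<sigma> x = g x)}.
        \<Prod>(u, v)\<in>dedges E r. Pmat ns (psi {u, v}) (\<sigma> u) (\<sigma> v))"

definition qtrans :: "nat list \<Rightarrow> 'v set \<Rightarrow> 'v set set \<Rightarrow> 'v \<Rightarrow> ('v set \<Rightarrow> int list \<Rightarrow> real)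
     \<Rightarrow> ('v \<Rightarrow> int list) \<Rightarrow> complex" where
  "qtrans ns V E r psi g =
     (\<Sum>h\<in>PiE (leaves V E) (\<lambda>_. Gset ns).
        (\<Prod>x\<in>leaves V E. gchar ns (g x) (h x)) * complex_of_real (pprob ns V E r psi h))"

definition wvec :: "nat list \<Rightarrow> 'v set \<Rightarrow> 'v set set \<Rightarrow> 'v \<Rightarrow> 'v \<Rightarrow> 'v
     \<Rightarrow> int list \<Rightarrow> int list \<Rightarrow> int list \<Rightarrow> 'v \<Rightarrow> int list" where
  "wvec ns V E i j k a b c = restrict
     (\<lambda>x. if x = i then a else if x = j then b else if x = k then c else gzero ns) (leaves V E)"

end

theory Submission
  imports Defs
begin

text \<open>
  The theorem is a consequence of Hendy's factorisation of the Fourier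
  transform q of the group-based model, which we prove from the definitions:
  \<^item> G = Z_n1 x ... x Z_nK is an abelian group; characters are multiplicative, and the
    transition matrix P = exp Q of an edge is a group convolution, so P(a, a+t) = f(t)
    and the Fourier transform of f is exp of the Fourier transform of psi.  Hence
    f-check is never zero, is even in h (psi is symmetric) and equals 1 at 0.
  \<^item> In the tree rooted at r, every vertex w other than r has a parent, and the labellings
    sigma with sigma(r) = 0 correspond bijectively to the increments along the edges
    (parent w, w).  Rewriting q in the increments splits it into a product over edges:
    q_g = prod_w sum_t (prod of the characters of the leaves below w)(t) f_w(t).
  \<^item> For the vectors w(a,b,c) of the theorem exactly two leaves carry the charges h and
    -h, so the factor of an edge is 1 if both or neither charged leaf lies below it, and
    f-check at h otherwise.  A combinatorial analysis of the pendant edge e and of the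
    path j--nu--k shows that the two numerator products and the denominator product
    differ exactly by the squared factor of e.
\<close>

section \<open>The group Z_n1 x ... x Z_nK\<close>

locale zgroup =
  fixes ns :: "nat list"
  assumes moduli_pos: "\<forall>n\<in>set ns. 0 < n"
begin

abbreviation "G \<equiv> Gset ns"

lemma modulus_pos: "k < length ns \<Longrightarrow> 0 < ns!k"
  using moduli_pos by auto

lemma length_gops[simp]:
  "length (gadd ns g h) = length ns" "length (gneg ns g) = length ns"
  "length (gsub ns g h) = length ns" "length (gzero ns) = length ns"
  by (simp_all add: gadd_def gneg_def gsub_def gzero_def)

lemma nth_gops[simp]:
  assumes "k < length ns"
  shows "gadd ns g h ! k = (g!k + h!k) mod int (ns!k)"
    and "gneg ns g ! k = (- (g!k)) mod int (ns!k)"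
    and "gsub ns g h ! k = (g!k - h!k) mod int (ns!k)"
    and "gzero ns ! k = 0"
  using assms by (simp_all add: gadd_def gneg_def gsub_def gzero_def mod_add_right_eq)

lemma mem_G: "g \<in> G \<longleftrightarrow> length g = length ns \<and> (\<forall>k<length ns. 0 \<le> g!k \<and> g!k < int (ns!k))"
  by (simp add: Gset_def)

lemma gops_in_G[simp]: "gadd ns g h \<in> G" "gneg ns g \<in> G" "gsub ns g h \<in> G" "gzero ns \<in> G"
  using modulus_pos by (auto simp: mem_G)

lemma G_eqI:
  assumes "g \<in> G" "h \<in> G" "\<And>k. k < length ns \<Longrightarrow> g!k mod int (ns!k) = h!k mod int (ns!k)"
  shows "g = h"
  using assms by (intro nth_equalityI) (auto simp: mem_G)

lemma finite_G[simp]: "finite G"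
proof -
  define M where "M = int (Max (insert 0 (set ns)))"
  have "G \<subseteq> {g. set g \<subseteq> {0..M} \<and> length g = length ns}"
  proof safe
    fix g x assume g: "g \<in> G" and "x \<in> set g"
    then obtain k where k: "k < length ns" "x = g!k" by (auto simp: in_set_conv_nth mem_G)
    have "int (ns!k) \<le> M" using k by (auto simp: M_def intro: Max_ge)
    then show "x \<in> {0..M}" using g k by (auto simp: mem_G)
  qed (auto simp: mem_G)
  moreover have "finite {g. set g \<subseteq> {0..M} \<and> length g = length ns}"
    by (rule finite_lists_length_eq) simp
  ultimately show ?thesis by (rule finite_subset)
qed

lemma gsub_gadd_cancel: "a \<in> G \<Longrightarrow> y \<in> G \<Longrightarrow> gsub ns (gadd ns a y) a = y"
  by (rule G_eqI) (auto simp: mod_simps)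

lemma gsub_gadd_assoc: "b \<in> G \<Longrightarrow> gsub ns b (gadd ns a y) = gsub ns (gsub ns b a) y"
  by (rule G_eqI) (auto simp: mod_simps algebra_simps)

lemma gadd_gsub_cancel: "a \<in> G \<Longrightarrow> b \<in> G \<Longrightarrow> gadd ns a (gsub ns b a) = b"
  by (rule G_eqI) (auto simp: mod_simps algebra_simps)

lemma gsub_eq_gzero_iff: "a \<in> G \<Longrightarrow> b \<in> G \<Longrightarrow> gsub ns b a = gzero ns \<longleftrightarrow> a = b"
proof
  assume ab: "a \<in> G" "b \<in> G" and "gsub ns b a = gzero ns"
  then have "b = gadd ns a (gzero ns)" using gadd_gsub_cancel[OF ab] by simp
  also have "\<dots> = a" using ab by (intro G_eqI) (auto simp: mem_G)
  finally show "a = b" by simp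
next
  assume "a \<in> G" "b \<in> G" "a = b"
  then show "gsub ns b a = gzero ns" by (intro G_eqI) auto
qed

lemma gneg_gneg: "a \<in> G \<Longrightarrow> gneg ns (gneg ns a) = a"
  by (rule G_eqI) (auto simp: mod_simps)

lemma sum_G_translate: "a \<in> G \<Longrightarrow> (\<Sum>x\<in>G. F x) = (\<Sum>y\<in>G. F (gadd ns a y))"
proof -
  assume a: "a \<in> G"
  have "bij_betw (gadd ns a) G G"
    by (rule bij_betw_byWitness[where f'="\<lambda>y. gsub ns y a"])
       (use a in \<open>auto simp: gsub_gadd_cancel gadd_gsub_cancel\<close>)
  then show ?thesis using sum.reindex_bij_betw[of "gadd ns a" G G F] by simp
qed

lemma sum_G_negate: "(\<Sum>x\<in>G. F x) = (\<Sum>y\<in>G. F (gneg ns y))"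
proof -
  have "bij_betw (gneg ns) G G"
    by (rule bij_betw_byWitness[where f'="gneg ns"]) (auto simp: gneg_gneg)
  then show ?thesis using sum.reindex_bij_betw[of "gneg ns" G G F] by simp
qed

end

definition root_unity :: "nat \<Rightarrow> int \<Rightarrow> complex" where
  "root_unity n m = exp (2 * complex_of_real pi * \<i> * of_int m / of_nat n)"

lemma root_unity_add: "root_unity n (a + b) = root_unity n a * root_unity n b"
  unfolding root_unity_def by (simp add: exp_add[symmetric] ring_distribs add_divide_distrib)

lemma root_unity_zero[simp]: "root_unity n 0 = 1"
  by (simp add: root_unity_def)

lemma root_unity_multiple: "0 < n \<Longrightarrow> root_unity n (int n * q) = 1"
proof -
  assume n: "0 < n"
  have "2 * complex_of_real pi * \<i> * of_int (int n * q) / of_nat n = (2 * of_int q * pi) * \<i>"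
    using n by (simp add: field_simps)
  then show ?thesis
    unfolding root_unity_def using exp_integer_2pi[of "real_of_int q"] by simp
qed

lemma root_unity_mod_right: "0 < n \<Longrightarrow> root_unity n (c * (a mod int n)) = root_unity n (c * a)"
proof -
  assume n: "0 < n"
  have "c * (a mod int n) = c * a + int n * (- c * (a div int n))"
    by (simp add: algebra_simps minus_div_mult_eq_mod[symmetric])
  then show ?thesis
    using root_unity_add[of n "c * a" "int n * (- c * (a div int n))"]
      root_unity_multiple[OF n, of "- c * (a div int n)"] by simp
qed

lemma root_unity_mod_left: "0 < n \<Longrightarrow> root_unity n ((a mod int n) * c) = root_unity n (a * c)"
  using root_unity_mod_right[of n c a] by (simp add: mult.commute)

context zgroup
begin

lemma gchar_root_unity: "gchar ns g h = (\<Prod>k<length ns. root_unity (ns!k) (g!k * h!k))"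
  by (simp add: gchar_def root_unity_def)

lemma gchar_gadd_right: "gchar ns c (gadd ns x s) = gchar ns c x * gchar ns c s"
  unfolding gchar_root_unity prod.distrib[symmetric]
  by (rule prod.cong) (auto simp: root_unity_mod_right modulus_pos ring_distribs root_unity_add)

lemma gchar_gzero[simp]: "gchar ns (gzero ns) t = 1" "gchar ns t (gzero ns) = 1"
  unfolding gchar_root_unity by simp_all

lemma gchar_gneg_mult: "gchar ns (gneg ns h) t * gchar ns h t = 1"
proof -
  have "gchar ns (gneg ns h) t * gchar ns h t
      = (\<Prod>k<length ns. root_unity (ns!k) (- (h!k) * t!k + h!k * t!k))"
    unfolding gchar_root_unity prod.distrib[symmetric] root_unity_add
    by (rule prod.cong) (auto simp: root_unity_mod_left modulus_pos)
  then show ?thesis by simp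
qed

lemma gchar_gneg_swap: "gchar ns (gneg ns h) t = gchar ns h (gneg ns t)"
  unfolding gchar_root_unity
  by (rule prod.cong) (auto simp: root_unity_mod_left root_unity_mod_right modulus_pos)

end

section \<open>The edge transition matrices\<close>

context zgroup
begin

abbreviation psi_hat :: "(int list \<Rightarrow> real) \<Rightarrow> int list \<Rightarrow> complex" where
  "psi_hat psi \<equiv> fourier ns (\<lambda>t. complex_of_real (psi t))"

text \<open>The entries of Q^n grow at most geometrically, so the exponential series converges.\<close>
lemma matpow_bound:
  fixes psi :: "int list \<Rightarrow> real"
  defines "B \<equiv> (\<Sum>b\<in>G. \<Sum>x\<in>G. \<bar>Qmat ns psi x b\<bar>)"
  shows "b \<in> G \<Longrightarrow> \<bar>matpow G (Qmat ns psi) n a b\<bar> \<le> B ^ n"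
proof (induction n arbitrary: b)
  case 0 then show ?case by simp
next
  case (Suc n)
  have B_nonneg: "0 \<le> B" unfolding B_def by (intro sum_nonneg) auto
  have column: "(\<Sum>x\<in>G. \<bar>Qmat ns psi x b\<bar>) \<le> B"
    unfolding B_def using Suc.prems
    by (intro member_le_sum[where f="\<lambda>b. \<Sum>x\<in>G. \<bar>Qmat ns psi x b\<bar>"]) (auto intro: sum_nonneg)
  have "\<bar>matpow G (Qmat ns psi) (Suc n) a b\<bar>
      \<le> (\<Sum>x\<in>G. \<bar>matpow G (Qmat ns psi) n a x\<bar> * \<bar>Qmat ns psi x b\<bar>)"
    by (simp add: abs_mult[symmetric] sum_abs del: abs_mult)
  also have "\<dots> \<le> (\<Sum>x\<in>G. B ^ n * \<bar>Qmat ns psi x b\<bar>)"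
    by (intro sum_mono mult_right_mono Suc.IH) auto
  also have "\<dots> \<le> B ^ n * B"
    using column B_nonneg by (simp add: sum_distrib_left[symmetric] mult_left_mono)
  finally show ?case by (simp add: mult.commute)
qed

lemma matpow_summable: "b \<in> G \<Longrightarrow> summable (\<lambda>n. matpow G (Qmat ns psi) n a b / fact n)"
proof -
  assume b: "b \<in> G"
  define B where "B = (\<Sum>b\<in>G. \<Sum>x\<in>G. \<bar>Qmat ns psi x b\<bar>)"
  have "summable (\<lambda>n. B^n / fact n)"
    using summable_exp_generic[of B] by (simp add: divide_inverse_commute)
  moreover have "norm (matpow G (Qmat ns psi) n a b / fact n) \<le> B^n / fact n" for n
    using matpow_bound[OF b, of psi n a]
    unfolding B_def real_norm_def abs_divide abs_of_pos[OF fact_gt_zero]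
    by (intro divide_right_mono) auto
  ultimately show ?thesis by (rule summable_comparison_test'[where N=0])
qed

text \<open>Q is a group convolution matrix, hence so are its powers: Q^n(a,b) = Q^n(0, b-a).\<close>
lemma matpow_translation_invariant:
  "a \<in> G \<Longrightarrow> b \<in> G \<Longrightarrow> matpow G (Qmat ns psi) n a b = matpow G (Qmat ns psi) n (gzero ns) (gsub ns b a)"
proof (induction n arbitrary: b)
  case 0 then show ?case using gsub_eq_gzero_iff[of a b] by auto
next
  case (Suc n)
  let ?M = "matpow G (Qmat ns psi) n (gzero ns)"
  have "matpow G (Qmat ns psi) (Suc n) a b = (\<Sum>x\<in>G. ?M (gsub ns x a) * psi (gsub ns b x))"
    unfolding matpow.simps
    by (rule sum.cong[OF refl]) (use Suc in \<open>simp add: Qmat_def[of ns psi _ b]\<close>)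
  also have "\<dots> = (\<Sum>y\<in>G. ?M (gsub ns (gadd ns a y) a) * psi (gsub ns b (gadd ns a y)))"
    by (rule sum_G_translate[OF Suc.prems(1)])
  also have "\<dots> = (\<Sum>y\<in>G. ?M y * psi (gsub ns (gsub ns b a) y))"
    using Suc.prems by (intro sum.cong) (auto simp: gsub_gadd_cancel gsub_gadd_assoc)
  also have "\<dots> = matpow G (Qmat ns psi) (Suc n) (gzero ns) (gsub ns b a)"
    by (simp add: Qmat_def)
  finally show ?case .
qed

lemma Pmat_translate: "a \<in> G \<Longrightarrow> t \<in> G \<Longrightarrow> Pmat ns psi a (gadd ns a t) = fedge ns psi t"
  unfolding fedge_def Pmat_def mexp_def
  by (simp add: matpow_translation_invariant[of a] gsub_gadd_cancel)

lemma fourier_matpow: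
  "fourier ns (\<lambda>t. complex_of_real (matpow G (Qmat ns psi) n (gzero ns) t)) c = psi_hat psi c ^ n"
proof (induction n)
  case 0
  have "(\<Sum>t\<in>G. gchar ns c t * complex_of_real (if gzero ns = t then 1 else 0)) = gchar ns c (gzero ns)"
    by (simp add: if_distrib cong: if_cong)
  then show ?case by (simp add: fourier_def)
next
  case (Suc n)
  let ?M = "\<lambda>x. complex_of_real (matpow G (Qmat ns psi) n (gzero ns) x)"
  have shifted: "(\<Sum>t\<in>G. gchar ns c t * complex_of_real (psi (gsub ns t x))) = gchar ns c x * psi_hat psi c"
    if x: "x \<in> G" for x
  proof -
    have "(\<Sum>t\<in>G. gchar ns c t * complex_of_real (psi (gsub ns t x)))
        = (\<Sum>s\<in>G. gchar ns c (gadd ns x s) * complex_of_real (psi (gsub ns (gadd ns x s) x)))"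
      by (rule sum_G_translate[OF x])
    also have "\<dots> = (\<Sum>s\<in>G. gchar ns c x * (gchar ns c s * complex_of_real (psi s)))"
      using x by (intro sum.cong) (auto simp: gsub_gadd_cancel gchar_gadd_right)
    finally show ?thesis by (simp add: fourier_def sum_distrib_left)
  qed
  have "fourier ns (\<lambda>t. complex_of_real (matpow G (Qmat ns psi) (Suc n) (gzero ns) t)) c
      = (\<Sum>t\<in>G. \<Sum>x\<in>G. ?M x * (gchar ns c t * complex_of_real (psi (gsub ns t x))))"
    by (simp add: fourier_def Qmat_def sum_distrib_left algebra_simps)
  also have "\<dots> = (\<Sum>x\<in>G. ?M x * (\<Sum>t\<in>G. gchar ns c t * complex_of_real (psi (gsub ns t x))))"
    by (subst sum.swap) (simp add: sum_distrib_left)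
  also have "\<dots> = (\<Sum>x\<in>G. gchar ns c x * ?M x * psi_hat psi c)"
    by (intro sum.cong) (simp_all add: shifted)
  also have "\<dots> = (\<Sum>x\<in>G. gchar ns c x * ?M x) * psi_hat psi c"
    by (simp add: sum_distrib_right)
  finally show ?case using Suc.IH by (simp add: fourier_def)
qed

lemma fcheck_exp: "fcheck ns psi c = exp (psi_hat psi c)"
proof -
  let ?a = "\<lambda>t n. matpow G (Qmat ns psi) n (gzero ns) t / fact n"
  let ?f = "\<lambda>t n. gchar ns c t * complex_of_real (?a t n)"
  have summable: "summable (?f t)" if "t \<in> G" for t
    using matpow_summable[OF that] by (intro summable_mult) (simp only: summable_complex_of_real)
  have "fcheck ns psi c = (\<Sum>t\<in>G. \<Sum>n. ?f t n)"
    unfolding fcheck_def fourier_def fedge_def Pmat_def mexp_def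
  proof (rule sum.cong[OF refl])
    fix t assume t: "t \<in> G"
    have "gchar ns c t * complex_of_real (suminf (?a t))
        = gchar ns c t * (\<Sum>n. complex_of_real (?a t n))"
      by (subst suminf_of_real[OF matpow_summable[OF t]]) (rule refl)
    also have "\<dots> = (\<Sum>n. ?f t n)"
      by (rule suminf_mult[symmetric]) (simp only: summable_complex_of_real matpow_summable[OF t])
    finally show "gchar ns c t * complex_of_real (suminf (?a t)) = (\<Sum>n. ?f t n)" .
  qed
  also have "\<dots> = (\<Sum>n. \<Sum>t\<in>G. ?f t n)"
    by (rule suminf_sum[symmetric]) (rule summable)
  also have "\<dots> = (\<Sum>n. psi_hat psi c ^ n /\<^sub>R fact n)"
  proof (rule suminf_cong)
    fix n
    have "(\<Sum>t\<in>G. ?f t n)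
        = fourier ns (\<lambda>t. complex_of_real (matpow G (Qmat ns psi) n (gzero ns) t)) c / of_real (fact n)"
      by (simp add: fourier_def sum_divide_distrib)
    then show "(\<Sum>t\<in>G. ?f t n) = psi_hat psi c ^ n /\<^sub>R fact n"
      by (simp add: fourier_matpow scaleR_conv_of_real divide_inverse mult.commute)
  qed
  also have "\<dots> = exp (psi_hat psi c)" by (simp add: exp_def)
  finally show ?thesis .
qed

text \<open>The three properties of f-check used below: it never vanishes, it is even (psi is
  symmetric), and it equals 1 at 0 (psi sums to 0, i.e. the rows of P sum to 1).\<close>
lemma fcheck_nonzero: "fcheck ns psi c \<noteq> 0"
  by (simp add: fcheck_exp)

lemma fcheck_gneg:
  assumes "edge_param ns psi"
  shows "fcheck ns psi (gneg ns h) = fcheck ns psi h"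
proof -
  have symmetric: "psi (gneg ns g) = psi g" if "g \<in> G" for g
    using assms that unfolding edge_param_def by metis
  have "psi_hat psi (gneg ns h) = (\<Sum>t\<in>G. gchar ns h (gneg ns t) * complex_of_real (psi t))"
    by (simp add: fourier_def gchar_gneg_swap)
  also have "\<dots> = (\<Sum>s\<in>G. gchar ns h (gneg ns (gneg ns s)) * complex_of_real (psi (gneg ns s)))"
    by (rule sum_G_negate)
  also have "\<dots> = psi_hat psi h"
    unfolding fourier_def by (intro sum.cong) (simp_all add: gneg_gneg symmetric)
  finally show ?thesis by (simp add: fcheck_exp)
qed

lemma fcheck_gzero:
  assumes "edge_param ns psi"
  shows "fcheck ns psi (gzero ns) = 1"
proof -
  have "psi_hat psi (gzero ns) = complex_of_real (\<Sum>g\<in>G. psi g)"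
    by (simp add: fourier_def flip: of_real_sum)
  moreover have "(\<Sum>g\<in>G. psi g) = 0" using assms unfolding edge_param_def by blast
  ultimately show ?thesis by (simp add: fcheck_exp)
qed

end

section \<open>Paths in acyclic graphs\<close>

abbreviation walk :: "'v set set \<Rightarrow> 'v list \<Rightarrow> bool" where
  "walk E \<equiv> successively (\<lambda>x y. {x, y} \<in> E)"

lemma is_path_walk: "is_path E p a b \<longleftrightarrow> p \<noteq> [] \<and> hd p = a \<and> last p = b \<and> distinct p \<and> walk E p"
  unfolding is_path_def successively_conv_nth by blast

lemma is_cycle_walk: "is_cycle E p \<longleftrightarrow> length p \<ge> 3 \<and> distinct p \<and> walk E p \<and> {last p, hd p} \<in> E"
  unfolding is_cycle_def successively_conv_nth by blast

lemma walk_rev: "walk E (rev xs) = walk E xs"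
  by (simp add: insert_commute)

lemma path_rev: "is_path E p a b \<Longrightarrow> is_path E (rev p) b a"
  by (simp add: is_path_walk hd_rev last_rev walk_rev del: successively_rev)

lemma path_prefix:
  assumes "is_path E p a b" "t < length p"
  shows "is_path E (take (Suc t) p) a (p ! t)"
proof -
  have "walk E (take (Suc t) p)"
    using assms(1) by (metis append_take_drop_id is_path_walk successively_append_iff)
  moreover have "take (Suc t) p \<noteq> []" "hd (take (Suc t) p) = a"
    using assms by (auto simp: is_path_walk)
  moreover have "last (take (Suc t) p) = p ! t"
    using assms(2) by (subst last_conv_nth) auto
  ultimately show ?thesis using assms(1) by (simp add: is_path_walk)
qed

lemma path_suffix:
  assumes "is_path E p a b" "t < length p"
  shows "is_path E (drop t p) (p ! t) b"
proof -
  have "walk E (drop t p)"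
    using assms(1) by (metis append_take_drop_id is_path_walk successively_append_iff)
  then show ?thesis using assms by (auto simp: is_path_walk hd_drop_conv_nth)
qed

text \<open>Two paths that leave a common start vertex a through different neighbours but reach
  the same end vertex close a cycle: follow the first path up to its first meeting point y
  with the second, and return along the second.\<close>
lemma diverging_paths_cycle:
  assumes p: "is_path E (a # p) a b" and q: "is_path E (a # q) a b"
    and ne: "p \<noteq> []" "q \<noteq> []" and diverge: "hd p \<noteq> hd q"
  shows "\<exists>c. is_cycle E c"
proof -
  have pp: "last p = b" "a \<notin> set p" "distinct p" "walk E p" "{a, hd p} \<in> E"
    using p ne by (auto simp: is_path_walk successively_Cons)
  have qq: "last q = b" "a \<notin> set q" "distinct q" "walk E q" "{a, hd q} \<in> E"
    using q ne by (auto simp: is_path_walk successively_Cons)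
  define p1 where "p1 = takeWhile (\<lambda>x. x \<notin> set q) p"
  have "b \<in> set p" "b \<in> set q" using pp qq ne by (metis last_in_set)+
  then have "dropWhile (\<lambda>x. x \<notin> set q) p \<noteq> []" by (simp add: dropWhile_eq_Nil_conv) blast
  then obtain y p3 where p_split: "p = p1 @ y # p3" and yq: "y \<in> set q"
    unfolding p1_def by (metis dropWhile_eq_Cons_conv list.exhaust takeWhile_dropWhile_id)
  have p1q: "set p1 \<inter> set q = {}" unfolding p1_def by (auto dest: set_takeWhileD)
  obtain q1 q2 where q_split: "q = q1 @ y # q2" using yq by (meson split_list)
  have long: "p1 \<noteq> [] \<or> q1 \<noteq> []"
    using diverge p_split q_split by auto
  define c where "c = a # p1 @ [y] @ rev q1"
  have "walk E (p1 @ [y])" using pp(4) p_split by (simp add: successively_append_iff successively_Cons)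
  moreover have "walk E (rev q1)"
    using qq(4) q_split by (simp only: walk_rev successively_append_iff)
  moreover have "q1 \<noteq> [] \<Longrightarrow> {y, last q1} \<in> E"
    using qq(4) q_split by (simp add: successively_append_iff insert_commute)
  ultimately have "walk E ((p1 @ [y]) @ rev q1)"
    by (simp only: successively_append_iff) (auto simp: hd_rev)
  moreover have "{a, hd ((p1 @ [y]) @ rev q1)} \<in> E" using pp(5) p_split by (cases p1) auto
  ultimately have "walk E c"
    unfolding c_def by (simp only: successively_Cons append_assoc[symmetric]) simp
  moreover have "{last c, hd c} \<in> E"
    using qq(5) q_split unfolding c_def by (cases q1) (auto simp: last_rev insert_commute)
  moreover have "distinct c" "3 \<le> length c"
    using pp(2,3) qq(2,3) p_split q_split p1q long unfolding c_def by (auto simp: Suc_le_eq)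
  ultimately show ?thesis unfolding is_cycle_walk by blast
qed

lemma path_unique:
  assumes acyclic: "\<nexists>c. is_cycle E c"
  shows "is_path E p a b \<Longrightarrow> is_path E q a b \<Longrightarrow> p = q"
proof (induction p arbitrary: a q)
  case Nil then show ?case by (simp add: is_path_walk)
next
  case (Cons x p)
  have x: "x = a" using Cons.prems by (simp add: is_path_walk)
  obtain q' where q: "q = a # q'" using Cons.prems(2) by (cases q) (auto simp: is_path_walk)
  have p_nil: "p = [] \<longleftrightarrow> b = a"
    using Cons.prems(1) x last_in_set[of p] by (cases "p = []") (auto simp: is_path_walk)
  have q_nil: "q' = [] \<longleftrightarrow> b = a"
    using Cons.prems(2) q last_in_set[of q'] by (cases "q' = []") (auto simp: is_path_walk)
  show ?case
  proof (cases "p = []")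
    case True then show ?thesis using p_nil q_nil q x by simp
  next
    case False
    then have q'_ne: "q' \<noteq> []" using p_nil q_nil by simp
    have "hd p = hd q'"
      using diverging_paths_cycle[of E a p b q'] Cons.prems q x False q'_ne acyclic by auto
    then have "is_path E p (hd p) b" "is_path E q' (hd p) b"
      using Cons.prems q x False q'_ne by (auto simp: is_path_walk successively_Cons)
    then show ?thesis using Cons.IH q x by blast
  qed
qed

text \<open>In an acyclic graph, a vertex u on a path to b that is adjacent to b must be b's
  predecessor on the path (otherwise the edge {u, b} would close a cycle).\<close>
lemma adjacent_on_path:
  assumes acyclic: "\<nexists>c. is_cycle E c"
    and p: "is_path E p a b" and u: "u \<in> set p" and e: "{u, b} \<in> E"
  shows "u = b \<or> (length p \<ge> 2 \<and> u = p ! (length p - 2))"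
proof -
  obtain t where t: "t < length p" "p ! t = u" using u by (auto simp: in_set_conv_nth)
  have "\<not> t + 3 \<le> length p"
  proof
    assume long: "t + 3 \<le> length p"
    have "is_path E (drop t p) u b" using path_suffix[OF p t(1)] t(2) by simp
    then have "is_cycle E (drop t p)"
      using long e by (auto simp: is_path_walk is_cycle_walk insert_commute)
    then show False using acyclic by blast
  qed
  then have "t = length p - 1 \<or> (length p \<ge> 2 \<and> t = length p - 2)" using t by linarith
  moreover have "p ! (length p - 1) = b" using p by (auto simp: is_path_walk last_conv_nth)
  ultimately show ?thesis using t by auto
qed

text \<open>Identifying a non-root vertex w with the edge (parent w, w), anc v is
  the set of edges on the path from r to v.\<close>
locale rooted_tree =
  fixes V :: "'v set" and E :: "'v set set" and r :: 'v
  assumes tree: "is_tree V E" and root_in_V: "r \<in> V"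
begin

lemma finite_V: "finite V" using tree by (simp add: is_tree_def)
lemma acyclic: "\<nexists>c. is_cycle E c" using tree by (simp add: is_tree_def)

lemma edge_ends: "{u, v} \<in> E \<Longrightarrow> u \<noteq> v \<and> u \<in> V \<and> v \<in> V"
  using tree unfolding is_tree_def by (metis doubleton_eq_iff)

definition root_path :: "'v \<Rightarrow> 'v list" where
  "root_path v = (THE p. is_path E p r v)"

definition parent :: "'v \<Rightarrow> 'v" where
  "parent v = root_path v ! (length (root_path v) - 2)"

definition anc :: "'v \<Rightarrow> 'v set" where
  "anc v = set (tl (root_path v))"

lemma root_path: "v \<in> V \<Longrightarrow> is_path E (root_path v) r v"
proof -
  assume v: "v \<in> V"
  obtain p where p: "is_path E p r v" using tree v root_in_V unfolding is_tree_def by blast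
  show ?thesis unfolding root_path_def
    by (rule theI[of _ p]) (use p path_unique[OF acyclic] in blast)+
qed

lemma root_path_eq: "v \<in> V \<Longrightarrow> is_path E p r v \<Longrightarrow> root_path v = p"
  using root_path path_unique[OF acyclic] by blast

lemma root_path_root: "root_path r = [r]"
  using root_path_eq[OF root_in_V, of "[r]"] by (simp add: is_path_walk)

lemma path_in_V: "is_path E p a b \<Longrightarrow> a \<in> V \<Longrightarrow> set p \<subseteq> V"
proof (induction p arbitrary: a)
  case (Cons x p)
  then show ?case
    by (cases p) (auto simp: is_path_walk successively_Cons dest: edge_ends)
qed simp

lemma root_path_length: "v \<in> V \<Longrightarrow> v \<noteq> r \<Longrightarrow> length (root_path v) \<ge> 2"
  using root_path[of v] by (cases "root_path v" rule: remdups_adj.cases) (auto simp: is_path_walk)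

lemma root_path_parent:
  assumes v: "v \<in> V" "v \<noteq> r"
  shows "root_path v = root_path (parent v) @ [v]" "parent v \<in> V" "{parent v, v} \<in> E"
    and "parent v \<noteq> v"
proof -
  let ?p = "root_path v"
  have p: "is_path E ?p r v" by (rule root_path[OF v(1)])
  have len: "length ?p \<ge> 2" by (rule root_path_length[OF v])
  have split: "?p = butlast ?p @ [v]" using p append_butlast_last_id[of ?p] by (simp add: is_path_walk)
  have prefix: "is_path E (butlast ?p) r (parent v)"
    using path_prefix[OF p, of "length ?p - 2"] len
    by (simp add: parent_def butlast_conv_take numeral_2_eq_2 Suc_diff_Suc)
  show pv: "parent v \<in> V"
    using path_in_V[OF p root_in_V] len unfolding parent_def by (auto simp: subset_iff)
  have "root_path (parent v) = butlast ?p" by (rule root_path_eq[OF pv prefix])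
  then show "?p = root_path (parent v) @ [v]" using split by simp
  have "{?p ! (length ?p - 2), ?p ! Suc (length ?p - 2)} \<in> E"
    using p len unfolding is_path_def by simp
  moreover have "?p ! Suc (length ?p - 2) = v"
    using p len by (auto simp: is_path_walk last_conv_nth Suc_diff_Suc numeral_2_eq_2)
  ultimately show e: "{parent v, v} \<in> E" by (simp add: parent_def)
  then show "parent v \<noteq> v" using edge_ends by blast
qed

lemma anc_root: "anc r = {}"
  by (simp add: anc_def root_path_root)

lemma anc_parent:
  assumes v: "v \<in> V" "v \<noteq> r"
  shows "anc v = insert v (anc (parent v))"
proof -
  have "root_path (parent v) \<noteq> []"
    using root_path[OF root_path_parent(2)[OF v]] by (simp add: is_path_walk)
  then show ?thesis using root_path_parent(1)[OF v] unfolding anc_def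
    by (cases "root_path (parent v)") auto
qed

lemma anc_subset: "v \<in> V \<Longrightarrow> anc v \<subseteq> V - {r}"
proof -
  assume v: "v \<in> V"
  have p: "is_path E (root_path v) r v" by (rule root_path[OF v])
  then obtain p' where "root_path v = r # p'" by (cases "root_path v") (auto simp: is_path_walk)
  then show ?thesis using p path_in_V[OF p root_in_V] by (auto simp: anc_def is_path_walk)
qed

lemma anc_self: "v \<in> V \<Longrightarrow> v \<noteq> r \<Longrightarrow> v \<in> anc v"
  using anc_parent by blast

lemma parent_induct[consumes 1, case_names step]:
  assumes v: "v \<in> V" and step: "\<And>v. v \<in> V \<Longrightarrow> (v \<noteq> r \<Longrightarrow> P (parent v)) \<Longrightarrow> P v"
  shows "P v"
  using v
proof (induction "length (root_path v)" arbitrary: v rule: less_induct)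
  case less
  show ?case
  proof (rule step[OF less.prems])
    assume "v \<noteq> r"
    then show "P (parent v)" using root_path_parent[OF less.prems] less.hyps by simp
  qed
qed

lemma anc_trans:
  assumes "x \<in> V" "w \<in> anc x"
  shows "anc w \<subseteq> anc x"
  using assms
proof (induction x rule: parent_induct)
  case (step v)
  have "v \<noteq> r" using step(3) anc_root by blast
  then have v: "anc v = insert v (anc (parent v))" using anc_parent step(1) by blast
  show ?case
  proof (cases "w = v")
    case False
    then have "w \<in> anc (parent v)" using step(3) v by blast
    then show ?thesis using step(2) \<open>v \<noteq> r\<close> v by blast
  qed simp
qed

lemma edge_orientation:
  assumes e: "{a, b} \<in> E"
  shows "(b \<in> V \<and> b \<noteq> r \<and> a = parent b) \<or> (a \<in> V \<and> a \<noteq> r \<and> b = parent a)"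
proof -
  have ab: "a \<noteq> b" "a \<in> V" "b \<in> V" using edge_ends[OF e] by auto
  have pb: "is_path E (root_path b) r b" by (rule root_path[OF ab(3)])
  show ?thesis
  proof (cases "a \<in> set (root_path b)")
    case True
    then have "b \<noteq> r" using root_path_root ab by auto
    moreover have "a = root_path b ! (length (root_path b) - 2)"
      using adjacent_on_path[OF acyclic pb True e] ab by auto
    ultimately show ?thesis using ab by (simp add: parent_def)
  next
    case False
    have "is_path E (root_path b @ [a]) r a"
      using pb False e by (auto simp: is_path_walk successively_append_iff insert_commute)
    then have pa: "root_path a = root_path b @ [a]" by (rule root_path_eq[OF ab(2)])
    have "a \<noteq> r" using False pb by (metis hd_in_set is_path_walk)
    moreover have "parent a = b"
    proof -
      have "root_path b \<noteq> []" "last (root_path b) = b" using pb by (auto simp: is_path_walk)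
      then show ?thesis unfolding parent_def pa by (simp add: nth_append last_conv_nth)
    qed
    ultimately show ?thesis using ab by simp
  qed
qed

lemma dedges_parent: "dedges E r = (\<lambda>v. (parent v, v)) ` (V - {r})"
proof
  show "dedges E r \<subseteq> (\<lambda>v. (parent v, v)) ` (V - {r})"
  proof
    fix x assume "x \<in> dedges E r"
    then obtain u v p where x: "x = (u, v)" "{u, v} \<in> E" "is_path E p r v" "u \<in> set p"
      by (auto simp: dedges_def)
    have uv: "u \<noteq> v" "v \<in> V" using edge_ends[OF x(2)] by auto
    have p: "root_path v = p" by (rule root_path_eq[OF uv(2) x(3)])
    have "v \<noteq> r" using p x(4) uv root_path_root by auto
    moreover have "u = parent v"
      using adjacent_on_path[OF acyclic x(3) x(4)] x(2) uv(1) p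
      by (auto simp: parent_def insert_commute)
    ultimately show "x \<in> (\<lambda>v. (parent v, v)) ` (V - {r})" using x uv by auto
  qed
next
  show "(\<lambda>v. (parent v, v)) ` (V - {r}) \<subseteq> dedges E r"
  proof
    fix x assume "x \<in> (\<lambda>v. (parent v, v)) ` (V - {r})"
    then obtain v where v: "v \<in> V" "v \<noteq> r" and x: "x = (parent v, v)" by blast
    have "parent v \<in> set (root_path (parent v))"
      using root_path[OF root_path_parent(2)[OF v]] by (metis is_path_walk last_in_set)
    then have "parent v \<in> set (root_path v)" using root_path_parent(1)[OF v] by simp
    then show "x \<in> dedges E r" unfolding x
      using root_path_parent(3)[OF v] root_path[OF v(1)] by (auto simp: dedges_def)
  qed
qed

lemma walk_exits_subtree:
  "walk E p \<Longrightarrow> p \<noteq> [] \<Longrightarrow> w \<in> anc (hd p) \<Longrightarrow> w \<notin> anc (last p) \<Longrightarrow>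
   \<exists>t. Suc t < length p \<and> p ! t = w \<and> p ! Suc t = parent w"
proof (induction p)
  case (Cons x p)
  show ?case
  proof (cases "p = []")
    case False
    have e: "{x, hd p} \<in> E" "walk E p" using Cons.prems(1) False by (auto simp: successively_Cons)
    show ?thesis
    proof (cases "w \<in> anc (hd p)")
      case True
      then obtain t where "Suc t < length p" "p ! t = w" "p ! Suc t = parent w"
        using Cons.IH[OF e(2) False True] Cons.prems False by auto
      then show ?thesis by (intro exI[of _ "Suc t"]) auto
    next
      case outside: False
      have "x = w \<and> hd p = parent w"
        using edge_orientation[OF e(1)]
      proof
        assume "hd p \<in> V \<and> hd p \<noteq> r \<and> x = parent (hd p)"
        then show ?thesis using anc_parent[of "hd p"] Cons.prems(3) outside by simp
      next
        assume "x \<in> V \<and> x \<noteq> r \<and> hd p = parent x"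
        then show ?thesis using anc_parent[of x] Cons.prems(3) outside by (metis insertE list.sel(1))
      qed
      then show ?thesis using False by (intro exI[of _ 0]) (cases p, auto)
    qed
  qed (use Cons.prems in simp)
qed simp

lemma path_exits_subtree:
  assumes "is_path E p a b" "w \<in> anc a" "w \<notin> anc b"
  shows "w \<in> set (butlast p)"
proof -
  obtain t where "Suc t < length p" "p ! t = w"
    using walk_exits_subtree[of p w] assms by (auto simp: is_path_walk)
  then have "butlast p ! t = w" "t < length (butlast p)" by (simp_all add: nth_butlast)
  then show ?thesis by (metis nth_mem)
qed

lemma path_exits_at_start:
  assumes p: "is_path E p w b" and "w \<in> anc w" "w \<notin> anc b"
  shows "Suc 0 < length p \<and> p ! 1 = parent w"
proof -
  obtain t where t: "Suc t < length p" "p ! t = w" "p ! Suc t = parent w"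
    using walk_exits_subtree[of p w] assms by (auto simp: is_path_walk)
  have "p ! 0 = w" using p by (cases p) (auto simp: is_path_walk)
  moreover have "distinct p" using p by (simp add: is_path_walk)
  ultimately have "t = 0" using nth_eq_iff_index_eq[of p t 0] t by fastforce
  then show ?thesis using t by simp
qed

end

section \<open>Hendy's factorisation of the Fourier transform\<close>

locale tree_model = zgroup ns + rooted_tree V E r
  for ns :: "nat list" and V :: "'v set" and E :: "'v set set" and r :: 'v +
  fixes psi :: "'v set \<Rightarrow> int list \<Rightarrow> real"
begin

abbreviation "L \<equiv> leaves V E"

lemma leaves_subset: "L \<subseteq> V"
  by (auto simp: leaves_def)

lemma finite_leaves: "finite L"
  using finite_V leaves_subset by (rule finite_subset[rotated])

definition labellings :: "('v \<Rightarrow> int list) set" where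
  "labellings = {\<sigma> \<in> PiE V (\<lambda>_. G). \<sigma> r = gzero ns}"

definition increments :: "('v \<Rightarrow> int list) set" where
  "increments = PiE (V - {r}) (\<lambda>_. G)"

text \<open>A labelling is recovered from its increments by summing them along root paths.\<close>
definition path_sum :: "('v \<Rightarrow> int list) \<Rightarrow> 'v \<Rightarrow> int list" where
  "path_sum \<tau> v = foldl (\<lambda>a w. gadd ns a (\<tau> w)) (gzero ns) (tl (root_path v))"

definition integrate :: "('v \<Rightarrow> int list) \<Rightarrow> 'v \<Rightarrow> int list" where
  "integrate \<tau> = restrict (path_sum \<tau>) V"

definition differentiate :: "('v \<Rightarrow> int list) \<Rightarrow> 'v \<Rightarrow> int list" where
  "differentiate \<sigma> = restrict (\<lambda>v. gsub ns (\<sigma> v) (\<sigma> (parent v))) (V - {r})"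

lemma foldl_gadd_in_G: "a \<in> G \<Longrightarrow> foldl (\<lambda>a w. gadd ns a (\<tau> w)) a xs \<in> G"
  by (induction xs arbitrary: a) auto

lemma gchar_foldl_gadd:
  "gchar ns c (foldl (\<lambda>a w. gadd ns a (\<tau> w)) a xs) = gchar ns c a * (\<Prod>w\<leftarrow>xs. gchar ns c (\<tau> w))"
  by (induction xs arbitrary: a) (auto simp: gchar_gadd_right)

lemma path_sum_in_G: "path_sum \<tau> v \<in> G"
  unfolding path_sum_def by (rule foldl_gadd_in_G) simp

lemma path_sum_root: "path_sum \<tau> r = gzero ns"
  by (simp add: path_sum_def root_path_root)

lemma path_sum_parent: "v \<in> V \<Longrightarrow> v \<noteq> r \<Longrightarrow> path_sum \<tau> v = gadd ns (path_sum \<tau> (parent v)) (\<tau> v)"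
proof -
  assume v: "v \<in> V" "v \<noteq> r"
  have "root_path (parent v) \<noteq> []"
    using root_path[OF root_path_parent(2)[OF v]] by (simp add: is_path_walk)
  then have "tl (root_path v) = tl (root_path (parent v)) @ [v]"
    using root_path_parent(1)[OF v] by (cases "root_path (parent v)") auto
  then show ?thesis unfolding path_sum_def by simp
qed

lemma gchar_path_sum: "v \<in> V \<Longrightarrow> gchar ns c (path_sum \<tau> v) = (\<Prod>w\<in>anc v. gchar ns c (\<tau> w))"
proof -
  assume v: "v \<in> V"
  have "distinct (tl (root_path v))" using root_path[OF v] by (simp add: is_path_walk distinct_tl)
  then show ?thesis unfolding path_sum_def gchar_foldl_gadd anc_def
    by (simp add: prod.distinct_set_conv_list)
qed

lemma integrate_in_labellings: "integrate \<tau> \<in> labellings"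
  using root_in_V by (simp add: integrate_def labellings_def path_sum_in_G path_sum_root)

lemma differentiate_in_increments: "differentiate \<sigma> \<in> increments"
  by (simp add: differentiate_def increments_def)

lemma integrate_increment:
  "v \<in> V - {r} \<Longrightarrow> integrate \<tau> v = gadd ns (integrate \<tau> (parent v)) (\<tau> v)"
  using root_path_parent(2)[of v] by (simp add: integrate_def path_sum_parent)

lemma integrate_differentiate: "\<sigma> \<in> labellings \<Longrightarrow> integrate (differentiate \<sigma>) = \<sigma>"
proof
  fix v assume s: "\<sigma> \<in> labellings"
  have "path_sum (differentiate \<sigma>) v = \<sigma> v" if "v \<in> V" for v
    using that
  proof (induction v rule: parent_induct)
    case (step v)
    show ?case
    proof (cases "v = r")
      case True then show ?thesis using s by (simp add: path_sum_root labellings_def)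
    next
      case False
      have "\<sigma> (parent v) \<in> G" "\<sigma> v \<in> G"
        using s step(1) root_path_parent(2)[OF step(1) False] by (auto simp: labellings_def)
      then show ?thesis using step False
        by (simp add: path_sum_parent differentiate_def gadd_gsub_cancel)
    qed
  qed
  then show "integrate (differentiate \<sigma>) v = \<sigma> v"
    using s by (auto simp: integrate_def labellings_def PiE_def extensional_def)
qed

lemma differentiate_integrate: "\<tau> \<in> increments \<Longrightarrow> differentiate (integrate \<tau>) = \<tau>"
proof
  fix v assume t: "\<tau> \<in> increments"
  show "differentiate (integrate \<tau>) v = \<tau> v"
  proof (cases "v \<in> V - {r}")
    case True
    then have "\<tau> v \<in> G" "integrate \<tau> (parent v) \<in> G"
      using t root_path_parent(2)[of v] by (auto simp: increments_def integrate_def path_sum_in_G)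
    then show ?thesis using True by (simp add: differentiate_def integrate_increment gsub_gadd_cancel)
  qed (use t in \<open>auto simp: differentiate_def increments_def PiE_def extensional_def\<close>)
qed

lemma finite_labellings: "finite labellings"
  unfolding labellings_def
  by (rule finite_subset[of _ "PiE V (\<lambda>_. G)"]) (auto intro: finite_PiE finite_V)

lemma qtrans_labelling_sum: "qtrans ns V E r psi g =
  (\<Sum>\<sigma>\<in>labellings. (\<Prod>x\<in>L. gchar ns (g x) (\<sigma> x)) *
     complex_of_real (\<Prod>(u, v)\<in>dedges E r. Pmat ns (psi {u, v}) (\<sigma> u) (\<sigma> v)))"
  (is "_ = (\<Sum>\<sigma>\<in>labellings. ?F \<sigma>)")
proof -
  let ?W = "\<lambda>\<sigma>. \<Prod>(u, v)\<in>dedges E r. Pmat ns (psi {u, v}) (\<sigma> u) (\<sigma> v)"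
  have fibre: "{\<sigma> \<in> PiE V (\<lambda>_. G). \<sigma> r = gzero ns \<and> (\<forall>x\<in>L. \<sigma> x = h x)}
      = {\<sigma>\<in>labellings. restrict \<sigma> L = h}" if "h \<in> PiE L (\<lambda>_. G)" for h
    using that by (auto simp: labellings_def fun_eq_iff PiE_def extensional_def)
  have "qtrans ns V E r psi g = (\<Sum>h\<in>PiE L (\<lambda>_. G). \<Sum>\<sigma>\<in>{\<sigma>\<in>labellings. restrict \<sigma> L = h}.
          (\<Prod>x\<in>L. gchar ns (g x) (h x)) * complex_of_real (?W \<sigma>))"
    unfolding qtrans_def pprob_def by (intro sum.cong) (simp_all add: fibre sum_distrib_left)
  also have "\<dots> = (\<Sum>h\<in>PiE L (\<lambda>_. G). \<Sum>\<sigma>\<in>{\<sigma>\<in>labellings. restrict \<sigma> L = h}. ?F \<sigma>)"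
    by (intro sum.cong) auto
  also have "\<dots> = (\<Sum>\<sigma>\<in>labellings. ?F \<sigma>)"
    using finite_leaves leaves_subset
    by (intro sum.group[OF finite_labellings]) (auto simp: labellings_def intro: finite_PiE)
  finally show ?thesis .
qed

text \<open>In terms of increments the edge weights decouple: P(sigma(parent v), sigma v) = f(tau v).\<close>
lemma edge_weight_integrate:
  assumes t: "\<tau> \<in> increments"
  shows "(\<Prod>(u, v)\<in>dedges E r. Pmat ns (psi {u, v}) (integrate \<tau> u) (integrate \<tau> v))
       = (\<Prod>v\<in>V - {r}. fedge ns (psi {parent v, v}) (\<tau> v))"
proof -
  have "inj_on (\<lambda>v. (parent v, v)) (V - {r})" by (auto intro: inj_onI)
  then have "(\<Prod>(u, v)\<in>dedges E r. Pmat ns (psi {u, v}) (integrate \<tau> u) (integrate \<tau> v))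
      = (\<Prod>v\<in>V - {r}. Pmat ns (psi {parent v, v}) (integrate \<tau> (parent v)) (integrate \<tau> v))"
    unfolding dedges_parent by (simp add: prod.reindex)
  also have "\<dots> = (\<Prod>v\<in>V - {r}. fedge ns (psi {parent v, v}) (\<tau> v))"
  proof (rule prod.cong[OF refl])
    fix v assume v: "v \<in> V - {r}"
    have "integrate \<tau> (parent v) \<in> G" "\<tau> v \<in> G"
      using t v root_path_parent(2)[of v] by (auto simp: integrate_def path_sum_in_G increments_def)
    then show "Pmat ns (psi {parent v, v}) (integrate \<tau> (parent v)) (integrate \<tau> v)
        = fedge ns (psi {parent v, v}) (\<tau> v)"
      using v by (simp add: integrate_increment Pmat_translate)
  qed
  finally show ?thesis .
qed

text \<open>The product of the characters of the leaves below the edge (parent w, w), i.e. the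
  character of the total charge in the clade Lambda(e) below that edge.\<close>
definition below_char :: "('v \<Rightarrow> int list) \<Rightarrow> 'v \<Rightarrow> int list \<Rightarrow> complex" where
  "below_char g w t = (\<Prod>x\<in>{x\<in>L. w \<in> anc x}. gchar ns (g x) t)"

text \<open>Exchanging leaves and edges: each leaf sees the increments of the edges above it.\<close>
lemma leaf_chars_integrate:
  "(\<Prod>x\<in>L. gchar ns (g x) (integrate \<tau> x)) = (\<Prod>w\<in>V - {r}. below_char g w (\<tau> w))"
proof -
  have "(\<Prod>x\<in>L. gchar ns (g x) (integrate \<tau> x)) = (\<Prod>x\<in>L. \<Prod>w\<in>{w\<in>V - {r}. w \<in> anc x}. gchar ns (g x) (\<tau> w))"
  proof (rule prod.cong[OF refl])
    fix x assume "x \<in> L"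
    then have x: "x \<in> V" using leaves_subset by auto
    then have "{w\<in>V - {r}. w \<in> anc x} = anc x" using anc_subset[OF x] by auto
    then show "gchar ns (g x) (integrate \<tau> x) = (\<Prod>w\<in>{w\<in>V - {r}. w \<in> anc x}. gchar ns (g x) (\<tau> w))"
      using x by (simp add: integrate_def gchar_path_sum)
  qed
  also have "\<dots> = (\<Prod>w\<in>V - {r}. below_char g w (\<tau> w))"
    unfolding below_char_def using finite_V finite_leaves by (intro prod.swap_restrict) auto
  finally show ?thesis .
qed

text \<open>Since characters
  are multiplicative, the factor of the edge above w is f-check evaluated at the total
  charge of the leaves below w.\<close>
theorem hendy_factorisation:
  "qtrans ns V E r psi g =
     (\<Prod>w\<in>V - {r}. \<Sum>t\<in>G. below_char g w t * complex_of_real (fedge ns (psi {parent w, w}) t))"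
proof -
  let ?H = "\<lambda>w t. below_char g w t * complex_of_real (fedge ns (psi {parent w, w}) t)"
  have "qtrans ns V E r psi g = (\<Sum>\<tau>\<in>increments. (\<Prod>x\<in>L. gchar ns (g x) (integrate \<tau> x)) *
     complex_of_real (\<Prod>(u, v)\<in>dedges E r. Pmat ns (psi {u, v}) (integrate \<tau> u) (integrate \<tau> v)))"
    unfolding qtrans_labelling_sum
    by (rule sum.reindex_bij_witness[where i=integrate and j=differentiate])
       (auto simp: integrate_differentiate differentiate_integrate
         integrate_in_labellings differentiate_in_increments)
  also have "\<dots> = (\<Sum>\<tau>\<in>increments. \<Prod>w\<in>V - {r}. ?H w (\<tau> w))"
    by (intro sum.cong) (simp_all add: edge_weight_integrate leaf_chars_integrate prod.distrib)
  also have "\<dots> = (\<Prod>w\<in>V - {r}. \<Sum>t\<in>G. ?H w t)"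
    unfolding increments_def using finite_V by (subst prod_sum_PiE) auto
  finally show ?thesis .
qed

end

lemma sum_opposite_charges:
  fixes X Y f :: "'a \<Rightarrow> complex"
  assumes inverse: "\<And>t. t \<in> A \<Longrightarrow> X t * Y t = 1"
    and sum_X: "(\<Sum>t\<in>A. X t * f t) = F" and sum_Y: "(\<Sum>t\<in>A. Y t * f t) = F"
    and sum_f: "(\<Sum>t\<in>A. f t) = 1"
  shows "(\<Sum>t\<in>A. (if P then X t else 1) * (if Q then Y t else 1) * f t) = (if P = Q then 1 else F)"
proof (cases P; cases Q)
  assume "P" "Q"
  have "(\<Sum>t\<in>A. X t * Y t * f t) = (\<Sum>t\<in>A. f t)" using inverse by (intro sum.cong) auto
  then show ?thesis using \<open>P\<close> \<open>Q\<close> sum_f by simp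
qed (use sum_X sum_Y sum_f in auto)

context tree_model
begin

definition edge_factor :: "int list \<Rightarrow> 'v \<Rightarrow> complex" where
  "edge_factor h w = fcheck ns (psi {parent w, w}) h"

lemma opposite_charges_factorisation:
  assumes params: "\<forall>d\<in>E. edge_param ns (psi d)"
    and charges: "\<And>w t. w \<in> V - {r} \<Longrightarrow> below_char g w t
                    = (if P w then gchar ns h t else 1) * (if Q w then gchar ns (gneg ns h) t else 1)"
  shows "qtrans ns V E r psi g = (\<Prod>w\<in>V - {r}. if P w = Q w then 1 else edge_factor h w)"
  unfolding hendy_factorisation
proof (rule prod.cong[OF refl])
  fix w assume w: "w \<in> V - {r}"
  have "edge_param ns (psi {parent w, w})" using params root_path_parent(3)[of w] w by blast
  then have "fcheck ns (psi {parent w, w}) (gneg ns h) = edge_factor h w"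
    "fcheck ns (psi {parent w, w}) (gzero ns) = 1"
    by (simp_all add: edge_factor_def fcheck_gneg fcheck_gzero)
  moreover have "gchar ns h t * gchar ns (gneg ns h) t = 1" for t
    using gchar_gneg_mult by (simp add: mult.commute)
  ultimately show "(\<Sum>t\<in>G. below_char g w t * complex_of_real (fedge ns (psi {parent w, w}) t))
      = (if P w = Q w then 1 else edge_factor h w)"
    unfolding charges[OF w]
    by (intro sum_opposite_charges) (simp_all add: fcheck_def fourier_def edge_factor_def)
qed

end

context rooted_tree
begin

lemma leaf_in_V: "x \<in> leaves V E \<Longrightarrow> x \<in> V"
  by (simp add: leaves_def)

lemma leaf_unique_edge:
  assumes x: "x \<in> leaves V E" and "d \<in> E" "x \<in> d" "d' \<in> E" "x \<in> d'"
  shows "d = d'"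
proof -
  have "card {e\<in>E. x \<in> e} = 1" using x by (simp add: leaves_def)
  then obtain a where single: "{e\<in>E. x \<in> e} = {a}" by (rule card_1_singletonE)
  have "d \<in> {e\<in>E. x \<in> e}" "d' \<in> {e\<in>E. x \<in> e}" using assms by simp_all
  then show ?thesis unfolding single by simp
qed

text \<open>A leaf has a single neighbour, so it cannot be an interior vertex of a path.\<close>
lemma leaf_not_interior:
  assumes x: "x \<in> leaves V E" and p: "is_path E p a b"
    and t: "p ! t = x" "0 < t" "Suc t < length p"
  shows False
proof -
  obtain s where s: "t = Suc s" using t by (cases t) auto
  have d: "distinct p" "walk E p" using p by (auto simp: is_path_walk)
  have "{p!s, x} \<in> E" "{x, p!Suc t} \<in> E"
    using successively_nth[OF d(2), of s] successively_nth[OF d(2), of t] s t by auto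
  then have "{p!s, x} = {x, p!Suc t}" using leaf_unique_edge[OF x, of "{p!s, x}" "{x, p!Suc t}"] by simp
  moreover have "p!s \<noteq> x" using nth_eq_iff_index_eq[OF d(1), of s t] s t by simp
  ultimately have "p!s = p!Suc t" by (auto simp: doubleton_eq_iff)
  then show False using nth_eq_iff_index_eq[OF d(1), of s "Suc t"] s t by simp
qed

lemma leaf_not_anc:
  assumes x: "x \<in> leaves V E" and y: "y \<in> V" "x \<noteq> y"
  shows "x \<notin> anc y"
proof
  assume "x \<in> anc y"
  then obtain s where "s < length (tl (root_path y))" "tl (root_path y) ! s = x"
    unfolding anc_def by (auto simp: in_set_conv_nth)
  then have s: "Suc s < length (root_path y)" "root_path y ! Suc s = x" by (auto simp: nth_tl)
  have p: "is_path E (root_path y) r y" by (rule root_path[OF y(1)])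
  have last: "root_path y ! (length (root_path y) - 1) = y"
    using p by (auto simp: is_path_walk last_conv_nth)
  have "Suc s \<noteq> length (root_path y) - 1"
  proof
    assume "Suc s = length (root_path y) - 1"
    then show False using last s(2) y(2) by simp
  qed
  then have "Suc (Suc s) < length (root_path y)" using s(1) by linarith
  then show False using leaf_not_interior[OF x p s(2)] by simp
qed

end

section \<open>A pendant edge and a path through its inner vertex\<close>

locale leaf_triple = rooted_tree V E r
  for V :: "'v set" and E :: "'v set set" and r :: 'v +
  fixes i nu j k :: 'v and e :: "'v set"
  assumes root_leaf: "r \<in> leaves V E" and e_edge: "e \<in> E" and e_ends: "e = {i, nu}"
    and i_leaf: "i \<in> leaves V E" and nu_in_V: "nu \<in> V" and nu_not_leaf: "nu \<notin> leaves V E"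
    and j_leaf: "j \<in> leaves V E" and k_leaf: "k \<in> leaves V E"
    and j_ne_i: "j \<noteq> i" and k_ne_i: "k \<noteq> i"
    and path_jk: "\<exists>p. is_path E p j k \<and> nu \<in> set p"
begin

lemma nu_ne_root: "nu \<noteq> r"
  using nu_not_leaf root_leaf by auto

lemma path_through_nu:
  obtains p t where "is_path E p j k" "p ! t = nu" "0 < t" "Suc t < length p"
proof -
  obtain p where p: "is_path E p j k" "nu \<in> set p" using path_jk by blast
  then obtain t where t: "t < length p" "p ! t = nu" by (auto simp: in_set_conv_nth)
  have "p ! 0 = j" using p(1) by (cases p) (auto simp: is_path_walk)
  then have "t \<noteq> 0" using t j_leaf nu_not_leaf by (cases "t = 0") auto
  moreover have "t \<noteq> length p - 1" using t p(1) k_leaf nu_not_leaf by (auto simp: is_path_walk last_conv_nth)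
  ultimately show ?thesis using that p(1) t by simp
qed

lemma j_ne_k: "j \<noteq> k"
proof
  assume "j = k"
  obtain p t where p: "is_path E p j k" "p ! t = nu" "0 < t" "Suc t < length p"
    by (rule path_through_nu)
  have ends: "p ! 0 = j" "p ! (length p - 1) = k" and d: "distinct p"
    using p(1) by (auto simp: is_path_walk hd_conv_nth last_conv_nth)
  have "p ! 0 = p ! (length p - 1) \<longleftrightarrow> 0 = length p - 1"
    by (rule nth_eq_iff_index_eq[OF d]) (use p(4) in auto)
  then show False using ends \<open>j = k\<close> p(3,4) by simp
qed

text \<open>The edge above nu lies on the root path of j or of k: otherwise both halves of the
  path from j to k, read from nu, would leave nu towards its parent, and the path would
  visit parent nu twice.\<close>
lemma nu_above_j_or_k: "nu \<in> anc j \<or> nu \<in> anc k"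
proof (rule ccontr)
  assume outside: "\<not> (nu \<in> anc j \<or> nu \<in> anc k)"
  obtain p t where p: "is_path E p j k" "p ! t = nu" "0 < t" "Suc t < length p"
    by (rule path_through_nu)
  have nu: "nu \<in> anc nu" using anc_self[OF nu_in_V nu_ne_root] .
  have "is_path E (rev (take (Suc t) p)) nu j"
    using path_rev[OF path_prefix[OF p(1), of t]] p(2,4) by simp
  then have "rev (take (Suc t) p) ! 1 = parent nu"
    using path_exits_at_start[OF _ nu] outside by blast
  moreover have "rev (take (Suc t) p) ! 1 = p ! (t - 1)"
    using p(3,4) by (simp add: rev_nth)
  moreover have "is_path E (drop t p) nu k" using path_suffix[OF p(1), of t] p(2,4) by simp
  then have "drop t p ! 1 = parent nu" using path_exits_at_start[OF _ nu] outside by blast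
  moreover have "drop t p ! 1 = p ! Suc t" using p(4) by simp
  ultimately have "p ! (t - 1) = p ! Suc t" by simp
  moreover have "distinct p" using p(1) by (simp add: is_path_walk)
  then have "p ! (t - 1) = p ! Suc t \<longleftrightarrow> t - 1 = Suc t"
    by (rule nth_eq_iff_index_eq) (use p(4) in auto)
  ultimately show False by simp
qed

lemma anc_nu_subset: "anc nu \<subseteq> anc j \<union> anc k"
  using nu_above_j_or_k anc_trans[OF leaf_in_V[OF j_leaf]] anc_trans[OF leaf_in_V[OF k_leaf]] by blast

text \<open>An edge above both j and k is above nu: otherwise the path from j to k would pass
  through its lower end twice, before and after nu.\<close>
lemma anc_j_inter_k_subset: "anc j \<inter> anc k \<subseteq> anc nu"
proof
  fix w assume w: "w \<in> anc j \<inter> anc k"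
  show "w \<in> anc nu"
  proof (rule ccontr)
    assume outside: "w \<notin> anc nu"
    obtain p t where p: "is_path E p j k" "p ! t = nu" "0 < t" "Suc t < length p"
      by (rule path_through_nu)
    have "is_path E (take (Suc t) p) j nu" using path_prefix[OF p(1), of t] p(2,4) by simp
    then have "w \<in> set (butlast (take (Suc t) p))"
      using path_exits_subtree w outside by blast
    then have before: "w \<in> set (take t p)" using p(4) by (simp add: butlast_take)
    have "is_path E (rev (drop t p)) k nu" using path_rev[OF path_suffix[OF p(1), of t]] p(2,4) by simp
    then have "w \<in> set (butlast (rev (drop t p)))"
      using path_exits_subtree w outside by blast
    then have after: "w \<in> set (drop (Suc t) p)" by (simp add: butlast_rev drop_Suc tl_drop)
    have "distinct p" using p(1) by (simp add: is_path_walk)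
    then show False using set_take_disj_set_drop_if_distinct[of p t "Suc t"] before after by auto
  qed
qed

lemma pendant_edge_nonroot:
  assumes "i \<noteq> r"
  shows "parent i = nu" "anc i = insert i (anc nu)" "i \<notin> anc j" "i \<notin> anc k" "{parent i, i} = e"
proof -
  have i: "i \<in> V" by (rule leaf_in_V[OF i_leaf])
  have "{parent i, i} \<in> E" "parent i \<noteq> i" using root_path_parent[OF i assms] by auto
  then show pe: "{parent i, i} = e" and "parent i = nu"
    using leaf_unique_edge[OF i_leaf _ _ e_edge] e_ends by (auto simp: doubleton_eq_iff)
  then show "anc i = insert i (anc nu)" using anc_parent[OF i assms] by simp
  show "i \<notin> anc j" using leaf_not_anc[OF i_leaf leaf_in_V[OF j_leaf]] j_ne_i by blast
  show "i \<notin> anc k" using leaf_not_anc[OF i_leaf leaf_in_V[OF k_leaf]] k_ne_i by blast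
qed

lemma pendant_edge_root:
  assumes "i = r"
  shows "anc nu = {nu}" "nu \<in> anc j" "nu \<in> anc k" "{parent nu, nu} = e"
proof -
  have "is_path E [r, nu] r nu" using nu_ne_root e_edge e_ends assms by (simp add: is_path_walk)
  then have nu_path: "root_path nu = [r, nu]" by (rule root_path_eq[OF nu_in_V])
  then show "anc nu = {nu}" "{parent nu, nu} = e" using e_ends assms
    by (simp_all add: anc_def parent_def)
  have below_nu: "nu \<in> anc x" if x: "x \<in> V" "x \<noteq> r" for x
  proof -
    have p: "is_path E (root_path x) r x" by (rule root_path[OF x(1)])
    then have "hd (root_path x) = r" by (simp add: is_path_walk)
    then obtain y ys where xp: "root_path x = r # y # ys"
      using root_path_length[OF x] by (cases "root_path x" rule: remdups_adj.cases) auto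
    then have "{r, y} \<in> E" using p by (simp add: is_path_walk)
    then have "{r, y} = e" using leaf_unique_edge[OF root_leaf _ _ e_edge] e_ends assms by simp
    then have "y = nu" using e_ends assms nu_ne_root by (auto simp: doubleton_eq_iff)
    then show ?thesis by (simp add: anc_def xp)
  qed
  show "nu \<in> anc j" using below_nu leaf_in_V[OF j_leaf] j_ne_i assms by blast
  show "nu \<in> anc k" using below_nu leaf_in_V[OF k_leaf] k_ne_i assms by blast
qed

definition pendant_vertex :: 'v where
  "pendant_vertex = (if i = r then nu else i)"

lemma pendant_vertex: "pendant_vertex \<in> V - {r}" "{parent pendant_vertex, pendant_vertex} = e"
  using pendant_edge_nonroot pendant_edge_root nu_in_V nu_ne_root leaf_in_V[OF i_leaf]
  unfolding pendant_vertex_def by auto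

lemma below_pattern:
  assumes w: "w \<in> V - {r}"
  shows "w = pendant_vertex \<Longrightarrow> (w \<in> anc i) \<noteq> (w \<in> anc j) \<and> (w \<in> anc i) \<noteq> (w \<in> anc k)"
    and "w \<noteq> pendant_vertex \<Longrightarrow> (w \<in> anc i) = (w \<in> anc j) \<or> (w \<in> anc i) = (w \<in> anc k)"
proof -
  assume "w = pendant_vertex"
  then show "(w \<in> anc i) \<noteq> (w \<in> anc j) \<and> (w \<in> anc i) \<noteq> (w \<in> anc k)"
    using pendant_edge_nonroot pendant_edge_root anc_root anc_self[OF leaf_in_V[OF i_leaf]]
    unfolding pendant_vertex_def by (cases "i = r") auto
next
  assume other: "w \<noteq> pendant_vertex"
  show "(w \<in> anc i) = (w \<in> anc j) \<or> (w \<in> anc i) = (w \<in> anc k)"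
  proof (cases "i = r")
    case True
    then show ?thesis using anc_root anc_j_inter_k_subset pendant_edge_root other
      unfolding pendant_vertex_def by auto
  next
    case False
    then have "w \<in> anc i \<longleftrightarrow> w \<in> anc nu"
      using pendant_edge_nonroot(2) other unfolding pendant_vertex_def by auto
    then show ?thesis using anc_nu_subset anc_j_inter_k_subset by blast
  qed
qed

end

locale triple_model = tree_model ns V E r psi + leaf_triple V E r i nu j k e
  for ns :: "nat list" and V :: "'v set" and E :: "'v set set" and r :: 'v
    and psi :: "'v set \<Rightarrow> int list \<Rightarrow> real" and i nu j k :: 'v and e :: "'v set" +
  assumes edge_params: "\<forall>d\<in>E. edge_param ns (psi d)"
begin

lemma below_char_wvec:
  "below_char (wvec ns V E i j k a b c) w t =
     (if w \<in> anc i then gchar ns a t else 1) * (if w \<in> anc j then gchar ns b t else 1) *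
     (if w \<in> anc k then gchar ns c t else 1)"
proof -
  let ?g = "\<lambda>x. if w \<in> anc x then gchar ns (wvec ns V E i j k a b c x) t else 1"
  have leaves: "{i, j, k} \<subseteq> L" using i_leaf j_leaf k_leaf by auto
  have "below_char (wvec ns V E i j k a b c) w t = (\<Prod>x\<in>L. ?g x)"
    unfolding below_char_def using finite_leaves by (simp add: prod.inter_filter)
  also have "\<dots> = (\<Prod>x\<in>{i, j, k}. ?g x)"
    using finite_leaves leaves by (intro prod.mono_neutral_right) (auto simp: wvec_def)
  also have "\<dots> = ?g i * ?g j * ?g k"
    using j_ne_i k_ne_i j_ne_k by (simp add: mult.assoc)
  finally show ?thesis using leaves j_ne_i k_ne_i j_ne_k by (simp add: wvec_def)
qed

lemma qtrans_wvec:
  "qtrans ns V E r psi (wvec ns V E i j k h (gneg ns h) (gzero ns))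
     = (\<Prod>w\<in>V - {r}. if (w \<in> anc i) = (w \<in> anc j) then 1 else edge_factor h w)"
  "qtrans ns V E r psi (wvec ns V E i j k (gneg ns h) (gzero ns) h)
     = (\<Prod>w\<in>V - {r}. if (w \<in> anc k) = (w \<in> anc i) then 1 else edge_factor h w)"
  "qtrans ns V E r psi (wvec ns V E i j k (gzero ns) (gneg ns h) h)
     = (\<Prod>w\<in>V - {r}. if (w \<in> anc k) = (w \<in> anc j) then 1 else edge_factor h w)"
  by (rule opposite_charges_factorisation[OF edge_params]; simp add: below_char_wvec mult.commute)+

lemma edge_factor_identity:
  fixes F :: "'a :: comm_monoid_mult"
  assumes "w \<in> V - {r}"
  shows "(if (w \<in> anc i) = (w \<in> anc j) then 1 else F) * (if (w \<in> anc k) = (w \<in> anc i) then 1 else F)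
       = (if (w \<in> anc k) = (w \<in> anc j) then 1 else F) * (if w = pendant_vertex then F\<^sup>2 else 1)"
  using below_pattern[OF assms] by (cases "w = pendant_vertex") (auto simp: power2_eq_square)

theorem pendant_edge_formula:
  "qtrans ns V E r psi (wvec ns V E i j k (gzero ns) (gneg ns h) h) \<noteq> 0 \<and>
   (fcheck ns (psi e) h)\<^sup>2 =
     qtrans ns V E r psi (wvec ns V E i j k h (gneg ns h) (gzero ns)) *
     qtrans ns V E r psi (wvec ns V E i j k (gneg ns h) (gzero ns) h) /
     qtrans ns V E r psi (wvec ns V E i j k (gzero ns) (gneg ns h) h)"
proof -
  let ?q = "\<lambda>a b c. qtrans ns V E r psi (wvec ns V E i j k a b c)"
  let ?F = "edge_factor h"
  have nonzero: "?q (gzero ns) (gneg ns h) h \<noteq> 0"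
    unfolding qtrans_wvec using finite_V by (simp add: edge_factor_def fcheck_nonzero)
  have "?q h (gneg ns h) (gzero ns) * ?q (gneg ns h) (gzero ns) h
      = (\<Prod>w\<in>V - {r}. (if (w \<in> anc k) = (w \<in> anc j) then 1 else ?F w) *
                       (if w = pendant_vertex then (?F w)\<^sup>2 else 1))"
    unfolding qtrans_wvec prod.distrib[symmetric] by (intro prod.cong) (simp_all add: edge_factor_identity)
  also have "\<dots> = ?q (gzero ns) (gneg ns h) h * (?F pendant_vertex)\<^sup>2"
    unfolding prod.distrib qtrans_wvec using finite_V pendant_vertex(1) by (simp add: prod.delta)
  finally show ?thesis
    using nonzero pendant_vertex(2) by (simp add: edge_factor_def field_simps)
qed

end

theorem mainTheorem5:
  fixes ns :: "nat list" and V :: "'v set" and E :: "'v set set" and r :: 'v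
    and psi :: "'v set \<Rightarrow> int list \<Rightarrow> real"
    and e :: "'v set" and i nu j k :: 'v and h :: "int list"
  assumes "\<forall>n\<in>set ns. 0 < n"
    and "is_tree V E"
    and "r \<in> leaves V E"
    and "\<forall>d\<in>E. edge_param ns (psi d)"
    and "e \<in> E" and "e = {i, nu}"
    and "i \<in> leaves V E" and "nu \<in> V" and "nu \<notin> leaves V E"
    and "j \<in> leaves V E" and "k \<in> leaves V E" and "j \<noteq> i" and "k \<noteq> i"
    and "\<exists>p. is_path E p j k \<and> nu \<in> set p"
    and "h \<in> Gset ns"
  shows "qtrans ns V E r psi (wvec ns V E i j k (gzero ns) (gneg ns h) h) \<noteq> 0 \<and>
         (fcheck ns (psi e) h)\<^sup>2 =
           qtrans ns V E r psi (wvec ns V E i j k h (gneg ns h) (gzero ns)) *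
           qtrans ns V E r psi (wvec ns V E i j k (gneg ns h) (gzero ns) h) /
           qtrans ns V E r psi (wvec ns V E i j k (gzero ns) (gneg ns h) h)"
proof -
  interpret triple_model ns V E r psi i nu j k e
    by unfold_locales (use assms in \<open>auto simp: leaves_def\<close>)
  show ?thesis by (rule pendant_edge_formula)
qed

end
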